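(* Let $(\gamma_i)_{i\in\omega}$ be modal formulas such that $\gamma_{i_2}\in\mathsf{K}+\gamma_{i_1}$ whenever $i_2<i_1$. Suppose that for every $l$ there is $n$ such that for every $k$ there is an inverse system $(\mathfrak{F}_i)_{i\in\omega}$ of finite Kripke frames with: (L1) $\mathfrak{F}_i\models\gamma_k$ for all $i$; (L2) $\varprojlim\mathfrak{F}_i\models\gamma_l$; (L3) $\varprojlim\mathfrak{F}_i\not\models\gamma_n$. Then for every set $\Sigma$ of modal formulas with $\mathsf{K}+\Sigma=\mathsf{K}+\{\gamma_n\mid n\in\omega\}$, infinitely many formulas of $\Sigma$ are not canonical.
   Context: $\mathsf{K}+\Sigma$ is the least normal modal logic containing $\Sigma$. A modal formula $\phi$ is canonical if it is valid in the canonical Kripke frame of the logic $\mathsf{K}+\phi$. An inverse system of Kripke frames indexed by $(\omega,\le)$ consists of frames $\mathfrak{F}_i=(W_i,(R_{i,\lambda}))$ and frame homomorphisms (bounded morphisms / p-morphisms) $f_{ij}:\mathfrak{F}_i\to\mathfrak{F}_j$ for $i\ge j$ with $f_{ii}=\mathrm{id}$ and $f_{jk}\circ f_{ij}=f_{ik}$ for $k\le j\le i$. Its inverse limit $\varprojlim\mathfrak{F}_i$ has carrier $\{x\in\prod_i W_i: f_{ij}(x_i)=x_j \text{ for all } i\ge j\}$ and $xR_\lambda y$ iff $x_iR_{i,\lambda}y_i$ for all $i$. *)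

theory Defs
  imports Main
begin

datatype 'm fm = Var nat | Bot | Imp "'m fm" "'m fm" | Box 'm "'m fm"

primrec subst :: "(nat \<Rightarrow> 'm fm) \<Rightarrow> 'm fm \<Rightarrow> 'm fm" where
  "subst \<sigma> (Var n) = \<sigma> n"
| "subst \<sigma> Bot = Bot"
| "subst \<sigma> (Imp p q) = Imp (subst \<sigma> p) (subst \<sigma> q)"
| "subst \<sigma> (Box a p) = Box a (subst \<sigma> p)"

inductive_set KL :: "'m fm set \<Rightarrow> 'm fm set" for \<Sigma> :: "'m fm set" where
  hyp: "\<phi> \<in> \<Sigma> \<Longrightarrow> \<phi> \<in> KL \<Sigma>"
| ax1: "Imp p (Imp q p) \<in> KL \<Sigma>"
| ax2: "Imp (Imp p (Imp q r)) (Imp (Imp p q) (Imp p r)) \<in> KL \<Sigma>"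
| ax3: "Imp (Imp (Imp p Bot) Bot) p \<in> KL \<Sigma>"
| axK: "Imp (Box a (Imp p q)) (Imp (Box a p) (Box a q)) \<in> KL \<Sigma>"
| mp: "Imp p q \<in> KL \<Sigma> \<Longrightarrow> p \<in> KL \<Sigma> \<Longrightarrow> q \<in> KL \<Sigma>"
| nec: "p \<in> KL \<Sigma> \<Longrightarrow> Box a p \<in> KL \<Sigma>"
| sub: "p \<in> KL \<Sigma> \<Longrightarrow> subst \<sigma> p \<in> KL \<Sigma>"

type_synonym ('w, 'm) frame = "'w set \<times> ('m \<Rightarrow> 'w \<Rightarrow> 'w \<Rightarrow> bool)"

primrec sat :: "('w, 'm) frame \<Rightarrow> (nat \<Rightarrow> 'w set) \<Rightarrow> 'w \<Rightarrow> 'm fm \<Rightarrow> bool" where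
  "sat F V w (Var n) = (w \<in> V n)"
| "sat F V w Bot = False"
| "sat F V w (Imp p q) = (sat F V w p \<longrightarrow> sat F V w q)"
| "sat F V w (Box a p) = (\<forall>v \<in> fst F. snd F a w v \<longrightarrow> sat F V v p)"

definition valid :: "('w, 'm) frame \<Rightarrow> 'm fm \<Rightarrow> bool" where
  "valid F \<phi> = (\<forall>V. \<forall>w \<in> fst F. sat F V w \<phi>)"

definition consistent :: "'m fm set \<Rightarrow> 'm fm set \<Rightarrow> bool" where
  "consistent L \<Gamma> = (\<not> (\<exists>ps. set ps \<subseteq> \<Gamma> \<and> foldr Imp ps Bot \<in> L))"

definition max_consistent :: "'m fm set \<Rightarrow> 'm fm set \<Rightarrow> bool" where
  "max_consistent L \<Gamma> = (consistent L \<Gamma> \<and> (\<forall>\<phi>. \<phi> \<notin> \<Gamma> \<longrightarrow> \<not> consistent L (insert \<phi> \<Gamma>)))"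

definition canonical_frame :: "'m fm set \<Rightarrow> ('m fm set, 'm) frame" where
  "canonical_frame L = ({\<Gamma>. max_consistent L \<Gamma>},
     (\<lambda>a \<Gamma> \<Delta>. \<forall>\<phi>. Box a \<phi> \<in> \<Gamma> \<longrightarrow> \<phi> \<in> \<Delta>))"

definition canonical :: "'m fm \<Rightarrow> bool" where
  "canonical \<phi> = valid (canonical_frame (KL {\<phi>})) \<phi>"

definition bounded_morphism :: "('w, 'm) frame \<Rightarrow> ('v, 'm) frame \<Rightarrow> ('w \<Rightarrow> 'v) \<Rightarrow> bool" where
  "bounded_morphism F G f =
     ((\<forall>x \<in> fst F. f x \<in> fst G) \<and>
      (\<forall>a. \<forall>x \<in> fst F. \<forall>y \<in> fst F. snd F a x y \<longrightarrow> snd G a (f x) (f y)) \<and>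
      (\<forall>a. \<forall>x \<in> fst F. \<forall>v \<in> fst G. snd G a (f x) v \<longrightarrow>
           (\<exists>u \<in> fst F. snd F a x u \<and> f u = v)))"

definition inverse_system :: "(nat \<Rightarrow> ('w, 'm) frame) \<Rightarrow> (nat \<Rightarrow> nat \<Rightarrow> 'w \<Rightarrow> 'w) \<Rightarrow> bool" where
  "inverse_system F f =
     ((\<forall>i j. j \<le> i \<longrightarrow> bounded_morphism (F i) (F j) (f i j)) \<and>
      (\<forall>i. \<forall>x \<in> fst (F i). f i i x = x) \<and>
      (\<forall>i j k. k \<le> j \<longrightarrow> j \<le> i \<longrightarrow> (\<forall>x \<in> fst (F i). f j k (f i j x) = f i k x)))"

definition inverse_limit :: "(nat \<Rightarrow> ('w, 'm) frame) \<Rightarrow> (nat \<Rightarrow> nat \<Rightarrow> 'w \<Rightarrow> 'w) \<Rightarrow> (nat \<Rightarrow> 'w, 'm) frame" where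
  "inverse_limit F f =
     ({x. (\<forall>i. x i \<in> fst (F i)) \<and> (\<forall>i j. j \<le> i \<longrightarrow> f i j (x i) = x j)},
      (\<lambda>a x y. \<forall>i. snd (F i) a (x i) (y i)))"

definition finite_frame :: "('w, 'm) frame \<Rightarrow> bool" where
  "finite_frame F = finite (fst F)"

end

theory Submission
  imports Defs "HOL-Library.Nat_Bijection"
begin

(* Let (F_i, f_ij) be an inverse system of finite frames and let psi be a
   canonical formula valid in every F_i.  Name each world w of each F_i by a propositional
   variable wvar i w and let Delta be the "diagram" of the system: all box-prefixed formulas
   saying that exactly one wvar i w holds for each i, that the names commute with the maps
   f_ij, and that the accessibility relations of the F_i are respected.  Every finite part of
   Delta is satisfied in some F_M, so the maximal K+psi-consistent sets containing Delta form
   a generated subframe of the canonical frame of K+psi, which maps onto the inverse limit by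
   a bounded morphism.  As psi is valid in the canonical frame, it is valid in the inverse limit.

   For the theorem, suppose a set Sigma axiomatising K + {gamma_n} had only finitely many
   non-canonical members.  By compactness they all lie in K + gamma_l for some l; choose n for
   this l, then a finite S \<subseteq> Sigma deriving gamma_n and k with S \<subseteq> K + gamma_k, and an
   inverse system for this k.  The canonical members of S are valid in the limit by the
   preservation result above, the others because the limit validates gamma_l; hence the limit
   validates gamma_n, a contradiction. *)

abbreviation Neg :: "'m fm \<Rightarrow> 'm fm" where "Neg p \<equiv> Imp p Bot"

section \<open>Derived rules of the Hilbert calculus\<close>

lemma K_id: "Imp p p \<in> KL S"
proof -
  have "Imp (Imp p (Imp (Imp p p) p)) (Imp (Imp p (Imp p p)) (Imp p p)) \<in> KL S" by (rule KL.ax2)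
  moreover have "Imp p (Imp (Imp p p) p) \<in> KL S" by (rule KL.ax1)
  ultimately have "Imp (Imp p (Imp p p)) (Imp p p) \<in> KL S" by (rule KL.mp)
  moreover have "Imp p (Imp p p) \<in> KL S" by (rule KL.ax1)
  ultimately show ?thesis by (rule KL.mp)
qed

lemma K_imp1: "q \<in> KL S \<Longrightarrow> Imp p q \<in> KL S"
  by (rule KL.mp[OF KL.ax1])

lemma K_mp2: "Imp p (Imp q r) \<in> KL S \<Longrightarrow> Imp p q \<in> KL S \<Longrightarrow> Imp p r \<in> KL S"
  by (rule KL.mp[OF KL.mp[OF KL.ax2]])

lemma K_hs: "Imp p q \<in> KL S \<Longrightarrow> Imp q r \<in> KL S \<Longrightarrow> Imp p r \<in> KL S"
  by (rule K_mp2[OF K_imp1])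

lemma K_lift: "Imp X Y \<in> KL S \<Longrightarrow> Imp (Imp a X) (Imp a Y) \<in> KL S"
  by (rule KL.mp[OF KL.ax2 K_imp1])

lemma K_lift2: "Imp X (Imp Y Z) \<in> KL S \<Longrightarrow> Imp (Imp a X) (Imp (Imp a Y) (Imp a Z)) \<in> KL S"
  by (rule K_hs[OF K_lift KL.ax2])

lemma K_elim_mid: "Imp X (Imp B C) \<in> KL S \<Longrightarrow> B \<in> KL S \<Longrightarrow> Imp X C \<in> KL S"
  by (rule K_mp2, assumption, rule K_imp1)

lemma K_exch: "Imp (Imp A (Imp B C)) (Imp B (Imp A C)) \<in> KL S"
proof -
  have "Imp (Imp Q R) (Imp (Imp P Q) (Imp P R)) \<in> KL S" for P Q R
    by (rule K_hs[OF KL.ax1 KL.ax2])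
  then have "Imp (Imp (Imp A B) (Imp A C)) (Imp B (Imp A C)) \<in> KL S"
    by (rule K_elim_mid[OF _ KL.ax1])
  then show ?thesis by (rule K_hs[OF KL.ax2])
qed

lemma K_contr: "Imp (Imp p (Imp p G)) (Imp p G) \<in> KL S"
  by (rule K_elim_mid[OF KL.ax2 K_id])

lemma foldr_mp: "Imp (foldr Imp ps (Imp A B)) (Imp (foldr Imp ps A) (foldr Imp ps B)) \<in> KL S"
  by (induction ps) (auto intro: K_id K_lift2)

lemma foldr_mono: "Imp X Y \<in> KL S \<Longrightarrow> Imp (foldr Imp ps X) (foldr Imp ps Y) \<in> KL S"
  by (induction ps) (auto intro: K_lift)

lemma foldr_weak: "Imp X (foldr Imp qs X) \<in> KL S"
  by (induction qs) (auto intro: K_id K_hs[OF KL.ax1 K_lift])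

lemma foldr_pull_in: "Imp (Imp p (foldr Imp rs (Imp p q))) (foldr Imp rs (Imp p q)) \<in> KL S"
  by (induction rs) (auto intro: K_contr K_hs[OF K_exch K_lift])

lemma foldr_discharge: "Imp (foldr Imp ps q) (foldr Imp (removeAll p ps) (Imp p q)) \<in> KL S"
proof (induction ps)
  case Nil
  then show ?case by (simp add: KL.ax1)
next
  case (Cons a ps)
  show ?case
  proof (cases "a = p")
    case True
    then show ?thesis using K_hs[OF K_lift[OF Cons] foldr_pull_in] by simp
  next
    case False
    then show ?thesis using K_lift[OF Cons] by simp
  qed
qed

lemma foldr_box: "Imp (Box a (foldr Imp ps c)) (foldr Imp (map (Box a) ps) (Box a c)) \<in> KL S"
  by (induction ps) (auto intro: K_id K_hs[OF KL.axK K_lift])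

text \<open>\<open>Der S H \<phi>\<close>: \<open>\<phi>\<close> follows in \<open>K + S\<close> from finitely many hypotheses in \<open>H\<close>
  (hypotheses are not closed under necessitation or substitution).\<close>
definition Der :: "'m fm set \<Rightarrow> 'm fm set \<Rightarrow> 'm fm \<Rightarrow> bool" where
  "Der S H \<phi> = (\<exists>ps. set ps \<subseteq> H \<and> foldr Imp ps \<phi> \<in> KL S)"

lemma consistent_Der: "consistent (KL S) H = (\<not> Der S H Bot)"
  unfolding consistent_def Der_def by blast

lemma Der_L: "\<phi> \<in> KL S \<Longrightarrow> Der S H \<phi>"
  unfolding Der_def by (rule exI[of _ "[]"]) simp

lemma Der_hyp: "\<phi> \<in> H \<Longrightarrow> Der S H \<phi>"
  unfolding Der_def by (rule exI[of _ "[\<phi>]"]) (simp add: K_id)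

lemma Der_mp: assumes "Der S H (Imp p q)" "Der S H p" shows "Der S H q"
proof -
  obtain ps1 where 1: "set ps1 \<subseteq> H" "foldr Imp ps1 (Imp p q) \<in> KL S"
    using assms(1) Der_def by blast
  obtain ps2 where 2: "set ps2 \<subseteq> H" "foldr Imp ps2 p \<in> KL S"
    using assms(2) Der_def by blast
  have "foldr Imp (ps1 @ ps2) (Imp p q) \<in> KL S"
    using KL.mp[OF foldr_mono[OF foldr_weak] 1(2), of ps2] by simp
  moreover have "foldr Imp (ps1 @ ps2) p \<in> KL S"
    using KL.mp[OF foldr_weak 2(2), of ps1] by simp
  ultimately have "foldr Imp (ps1 @ ps2) q \<in> KL S" by (rule KL.mp[OF KL.mp[OF foldr_mp]])
  then show ?thesis unfolding Der_def using 1(1) 2(1) by (intro exI[of _ "ps1 @ ps2"]) auto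
qed

lemma Der_ded: assumes "Der S (insert p H) q" shows "Der S H (Imp p q)"
proof -
  obtain ps where ps: "set ps \<subseteq> insert p H" "foldr Imp ps q \<in> KL S" using assms Der_def by blast
  have "foldr Imp (removeAll p ps) (Imp p q) \<in> KL S" by (rule KL.mp[OF foldr_discharge ps(2)])
  moreover have "set (removeAll p ps) \<subseteq> H" using ps(1) by auto
  ultimately show ?thesis unfolding Der_def by blast
qed

lemma Der_bot: "Der S H Bot \<Longrightarrow> Der S H \<phi>"
  by (rule Der_mp[OF Der_L[OF KL.ax3]], rule Der_mp[OF Der_L[OF KL.ax1]])

lemma Der_cut: assumes "Der S H' \<phi>" "\<And>x. x \<in> H' \<Longrightarrow> Der S H x" shows "Der S H \<phi>"
proof -
  obtain ps where ps: "set ps \<subseteq> H'" "foldr Imp ps \<phi> \<in> KL S" using assms(1) Der_def by blast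
  have "Der S H (foldr Imp ps \<chi>) \<Longrightarrow> set ps \<subseteq> H' \<Longrightarrow> Der S H \<chi>" for \<chi>
  proof (induction ps arbitrary: \<chi>)
    case (Cons x ps) then show ?case using Der_mp assms(2) by simp blast
  qed simp
  then show ?thesis using ps Der_L by blast
qed

lemma Der_box: assumes "Der S B c" "\<And>\<phi>. \<phi> \<in> B \<Longrightarrow> Box a \<phi> \<in> G"
  shows "Der S G (Box a c)"
proof -
  obtain ps where ps: "set ps \<subseteq> B" "foldr Imp ps c \<in> KL S" using assms(1) Der_def by blast
  have "foldr Imp (map (Box a) ps) (Box a c) \<in> KL S" by (rule KL.mp[OF foldr_box KL.nec[OF ps(2)]])
  moreover have "set (map (Box a) ps) \<subseteq> G" using ps(1) assms(2) by auto
  ultimately show ?thesis unfolding Der_def by blast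
qed

section \<open>Maximal consistent sets\<close>

context fixes S :: "'m fm set" and \<Gamma> :: "'m fm set"
  assumes mc: "max_consistent (KL S) \<Gamma>"
begin

lemma mcs_cons: "\<not> Der S \<Gamma> Bot"
  using mc unfolding max_consistent_def consistent_Der by blast

lemma mcs_der: "Der S \<Gamma> \<phi> \<Longrightarrow> \<phi> \<in> \<Gamma>"
proof (rule ccontr)
  assume a: "Der S \<Gamma> \<phi>" "\<phi> \<notin> \<Gamma>"
  then have "Der S (insert \<phi> \<Gamma>) Bot" using mc unfolding max_consistent_def consistent_Der by blast
  then have "Der S \<Gamma> (Imp \<phi> Bot)" by (rule Der_ded)
  then show False using a(1) Der_mp mcs_cons by blast
qed

lemma mcs_bot: "Bot \<notin> \<Gamma>"
  using mcs_cons Der_hyp by blast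

lemma mcs_mp: "Imp p q \<in> \<Gamma> \<Longrightarrow> p \<in> \<Gamma> \<Longrightarrow> q \<in> \<Gamma>"
  by (meson Der_hyp Der_mp mcs_der)

lemma mcs_imp: "Imp p q \<in> \<Gamma> \<longleftrightarrow> (p \<in> \<Gamma> \<longrightarrow> q \<in> \<Gamma>)"
proof
  assume "Imp p q \<in> \<Gamma>" then show "p \<in> \<Gamma> \<longrightarrow> q \<in> \<Gamma>" using mcs_mp by blast
next
  assume a: "p \<in> \<Gamma> \<longrightarrow> q \<in> \<Gamma>"
  show "Imp p q \<in> \<Gamma>"
  proof (cases "p \<in> \<Gamma>")
    case True
    then have "Der S \<Gamma> q" using a by (blast intro: Der_hyp)
    then show ?thesis by (meson Der_L Der_mp KL.ax1 mcs_der)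
  next
    case False
    then have "Der S (insert p \<Gamma>) Bot"
      using mc unfolding max_consistent_def consistent_Der by blast
    then have "Der S (insert p \<Gamma>) q" by (rule Der_bot)
    then show ?thesis by (intro mcs_der Der_ded)
  qed
qed

end

fun disj :: "'m fm list \<Rightarrow> 'm fm" where
  "disj [] = Bot"
| "disj (p # ps) = Imp (Neg p) (disj ps)"

lemma mcs_disj: "max_consistent (KL S) \<Gamma> \<Longrightarrow> disj ps \<in> \<Gamma> \<Longrightarrow> \<exists>p\<in>set ps. p \<in> \<Gamma>"
  by (induction ps) (auto simp: mcs_bot mcs_imp)

lemma sat_disj: "sat F V w (disj ps) = (\<exists>p\<in>set ps. sat F V w p)"
  by (induction ps) auto

lemma sat_foldr: "sat F V w (foldr Imp ps c) = ((\<forall>p\<in>set ps. sat F V w p) \<longrightarrow> sat F V w c)"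
  by (induction ps) auto

lemma finite_subset_mono_Union:
  fixes A :: "nat \<Rightarrow> 'a set"
  assumes "mono A" "finite B" "B \<subseteq> (\<Union>n. A n)"
  obtains n where "B \<subseteq> A n"
proof -
  have "A m \<subseteq> A n \<or> A n \<subseteq> A m" for m n
    using nat_le_linear[of m n] monoD[OF assms(1)] by blast
  then have "subset.chain UNIV (range A)" unfolding subset_chain_def by blast
  then obtain X where "X \<in> range A" "B \<subseteq> X"
    using finite_subset_Union_chain[OF assms(2,3)] by blast
  then show thesis using that by blast
qed

lemma lindenbaum:
  assumes "consistent (KL S) D"
  obtains \<Gamma> where "D \<subseteq> \<Gamma>" "max_consistent (KL S) \<Gamma>"
proof -
  let ?A = "{G. D \<subseteq> G \<and> consistent (KL S) G}"
  have "\<Union>C \<in> ?A" if C: "C \<noteq> {}" "subset.chain ?A C" for C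
  proof -
    have "consistent (KL S) (\<Union>C)"
      unfolding consistent_def
    proof
      assume "\<exists>ps. set ps \<subseteq> \<Union>C \<and> foldr Imp ps Bot \<in> KL S"
      then obtain ps where ps: "set ps \<subseteq> \<Union>C" "foldr Imp ps Bot \<in> KL S" by blast
      obtain X where "X \<in> C" "set ps \<subseteq> X"
        using finite_subset_Union_chain[OF _ ps(1) C(1,2)] by blast
      then show False using C(2) ps(2) unfolding subset_chain_def consistent_def by blast
    qed
    moreover have "D \<subseteq> \<Union>C" using C unfolding subset_chain_def by blast
    ultimately show ?thesis by blast
  qed
  then obtain M where M: "M \<in> ?A" "\<forall>X\<in>?A. M \<subseteq> X \<longrightarrow> X = M"
    using subset_Zorn_nonempty[of ?A] assms by blast
  then have "max_consistent (KL S) M" unfolding max_consistent_def by blast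
  then show thesis using M(1) that by blast
qed

section \<open>Soundness, monotonicity and compactness of \<open>K + \<Sigma>\<close>\<close>

lemma sat_subst: "sat F V w (subst \<sigma> p) = sat F (\<lambda>n. {u. sat F V u (\<sigma> n)}) w p"
  by (induction p arbitrary: w) auto

lemma soundness:
  assumes "\<And>s. s \<in> S \<Longrightarrow> valid F s" "\<phi> \<in> KL S" shows "valid F \<phi>"
  using assms(2)
proof (induction rule: KL.induct)
  case (hyp \<phi>) then show ?case using assms(1) by blast
next
  case (sub p \<sigma>) then show ?case unfolding valid_def by (simp add: sat_subst)
qed (auto simp: valid_def)

lemma KL_mono: "A \<subseteq> KL B \<Longrightarrow> \<phi> \<in> KL A \<Longrightarrow> \<phi> \<in> KL B"
proof -
  assume a: "A \<subseteq> KL B" "\<phi> \<in> KL A"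
  from a(2) show ?thesis by (induction rule: KL.induct) (use a(1) in \<open>auto intro: KL.intros\<close>)
qed

lemma KL_compact: "\<phi> \<in> KL A \<Longrightarrow> \<exists>A'. finite A' \<and> A' \<subseteq> A \<and> \<phi> \<in> KL A'"
proof (induction rule: KL.induct)
  case (hyp \<phi>) then show ?case by (intro exI[of _ "{\<phi>}"]) (auto intro: KL.hyp)
next
  case (mp p q)
  then obtain A1 A2 where A: "finite A1" "A1 \<subseteq> A" "Imp p q \<in> KL A1"
    "finite A2" "A2 \<subseteq> A" "p \<in> KL A2" by blast
  have "A1 \<subseteq> KL (A1 \<union> A2)" "A2 \<subseteq> KL (A1 \<union> A2)" by (auto intro: KL.hyp)
  then have "q \<in> KL (A1 \<union> A2)" using A(3,6) by (meson KL.mp KL_mono)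
  then show ?case using A by blast
next
  case (nec p a) then show ?case by (auto intro: KL.nec)
next
  case (sub p \<sigma>) then show ?case by (auto intro: KL.sub)
qed (auto intro: KL.intros)

lemma valid_generated_bounded_image:
  fixes W :: "'w set" and R :: "'m \<Rightarrow> 'w \<Rightarrow> 'w \<Rightarrow> bool" and X :: "('v,'m) frame"
  assumes val: "valid (W, R) \<psi>"
    and G: "G \<subseteq> W" "\<And>a x v. x \<in> G \<Longrightarrow> v \<in> W \<Longrightarrow> R a x v \<Longrightarrow> v \<in> G"
    and h: "\<And>x. x \<in> G \<Longrightarrow> h x \<in> fst X"
    and fw: "\<And>a x y. x \<in> G \<Longrightarrow> y \<in> G \<Longrightarrow> R a x y \<Longrightarrow> snd X a (h x) (h y)"
    and bk: "\<And>a x v. x \<in> G \<Longrightarrow> v \<in> fst X \<Longrightarrow> snd X a (h x) v \<Longrightarrow> \<exists>u\<in>G. R a x u \<and> h u = v"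
    and sj: "\<And>y. y \<in> fst X \<Longrightarrow> \<exists>x\<in>G. h x = y"
  shows "valid X \<psi>"
  unfolding valid_def
proof (intro allI ballI)
  fix V y assume y: "y \<in> fst X"
  define V' where "V' n = {x. h x \<in> V n}" for n :: nat
  have eq: "x \<in> G \<Longrightarrow> sat (W, R) V' x \<phi> = sat X V (h x) \<phi>" for x \<phi>
  proof (induction \<phi> arbitrary: x)
    case (Var n) then show ?case by (simp add: V'_def)
  next
    case (Box a \<phi>)
    show ?case
    proof
      assume L: "sat (W, R) V' x (Box a \<phi>)"
      show "sat X V (h x) (Box a \<phi>)"
      proof (simp, intro ballI impI)
        fix v assume v: "v \<in> fst X" "snd X a (h x) v"
        then obtain u where u: "u \<in> G" "R a x u" "h u = v" using bk[OF Box.prems] by blast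
        then show "sat X V v \<phi>" using L Box.IH G(1) by auto
      qed
    next
      assume "sat X V (h x) (Box a \<phi>)"
      then show "sat (W, R) V' x (Box a \<phi>)"
        using fw Box.prems Box.IH G h by auto
    qed
  qed auto
  obtain x where "x \<in> G" "h x = y" using sj y by blast
  then show "sat X V y \<psi>" using eq[of x \<psi>] val G(1) unfolding valid_def by auto
qed

section \<open>The diagram of an inverse system of finite frames\<close>

definition wvar :: "nat \<Rightarrow> nat \<Rightarrow> 'm fm" where "wvar i w = Var (prod_encode (i, w))"

context
  fixes F :: "nat \<Rightarrow> (nat, 'm) frame" and f :: "nat \<Rightarrow> nat \<Rightarrow> nat \<Rightarrow> nat"
  assumes sys: "inverse_system F f" and fin: "\<forall>i. finite_frame (F i)"
begin

lemma f_bounded: "j \<le> i \<Longrightarrow> bounded_morphism (F i) (F j) (f i j)"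
  using sys unfolding inverse_system_def by blast

lemma f_in: "j \<le> i \<Longrightarrow> x \<in> fst (F i) \<Longrightarrow> f i j x \<in> fst (F j)"
  using f_bounded unfolding bounded_morphism_def by blast

lemma f_fw: "j \<le> i \<Longrightarrow> x \<in> fst (F i) \<Longrightarrow> y \<in> fst (F i) \<Longrightarrow> snd (F i) a x y
    \<Longrightarrow> snd (F j) a (f i j x) (f i j y)"
  using f_bounded unfolding bounded_morphism_def by blast

lemma f_bk: "j \<le> i \<Longrightarrow> x \<in> fst (F i) \<Longrightarrow> v \<in> fst (F j) \<Longrightarrow> snd (F j) a (f i j x) v
    \<Longrightarrow> \<exists>u\<in>fst (F i). snd (F i) a x u \<and> f i j u = v"
  using f_bounded unfolding bounded_morphism_def by blast

lemma f_comp: "k \<le> j \<Longrightarrow> j \<le> i \<Longrightarrow> x \<in> fst (F i) \<Longrightarrow> f j k (f i j x) = f i k x"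
  using sys unfolding inverse_system_def by blast

text \<open>The worlds of the (finite) \<open>i\<close>-th frame as a list, so they can be enumerated in a
  disjunction.\<close>
definition worlds :: "nat \<Rightarrow> nat list" where "worlds i = sorted_list_of_set (fst (F i))"

lemma set_worlds: "set (worlds i) = fst (F i)"
  unfolding worlds_def using fin by (simp add: finite_frame_def)

text \<open>The basic diagram formulas about the frames \<open>F 0, \<dots>, F M\<close>: some world is named, at
  most one is, naming commutes with the maps, and a world has exactly the successors it has in
  its frame.\<close>
inductive_set diagram :: "nat \<Rightarrow> 'm fm set" for M :: nat where
  d_one: "i \<le> M \<Longrightarrow> disj (map (wvar i) (worlds i)) \<in> diagram M"
| d_uniq: "i \<le> M \<Longrightarrow> w \<in> fst (F i) \<Longrightarrow> v \<in> fst (F i) \<Longrightarrow> w \<noteq> v \<Longrightarrow>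
     Imp (wvar i w) (Neg (wvar i v)) \<in> diagram M"
| d_comp: "j \<le> i \<Longrightarrow> i \<le> M \<Longrightarrow> w \<in> fst (F i) \<Longrightarrow>
     Imp (wvar i w) (wvar j (f i j w)) \<in> diagram M"
| d_dia: "i \<le> M \<Longrightarrow> w \<in> fst (F i) \<Longrightarrow> v \<in> fst (F i) \<Longrightarrow> snd (F i) a w v \<Longrightarrow>
     Imp (wvar i w) (Neg (Box a (Neg (wvar i v)))) \<in> diagram M"
| d_box: "i \<le> M \<Longrightarrow> w \<in> fst (F i) \<Longrightarrow>
     Imp (wvar i w) (Box a (disj (map (wvar i) (filter (snd (F i) a w) (worlds i))))) \<in> diagram M"

definition boxed_diagram :: "nat \<Rightarrow> 'm fm set" where
  "boxed_diagram M = {foldr Box bs \<delta> | bs \<delta>. \<delta> \<in> diagram M}"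

definition Delta :: "'m fm set" where "Delta = (\<Union>M. boxed_diagram M)"

lemma diagram_mono: "\<delta> \<in> diagram M \<Longrightarrow> M \<le> M' \<Longrightarrow> \<delta> \<in> diagram M'"
  by (induction rule: diagram.induct) (auto intro: diagram.intros)

lemma mono_boxed_diagram: "mono boxed_diagram"
proof (rule monoI)
  fix M M' :: nat assume "M \<le> M'"
  then have "diagram M \<subseteq> diagram M'" using diagram_mono by blast
  then show "boxed_diagram M \<subseteq> boxed_diagram M'" unfolding boxed_diagram_def by blast
qed

lemma diagram_Delta: "\<delta> \<in> diagram M \<Longrightarrow> \<delta> \<in> Delta"
  unfolding Delta_def boxed_diagram_def by (auto intro!: exI[of _ M] exI[of _ "[]"])

lemma Delta_Box: "\<phi> \<in> Delta \<Longrightarrow> Box a \<phi> \<in> Delta"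
  unfolding Delta_def boxed_diagram_def by (auto intro!: exI[of _ "a # _"]) (metis foldr_Cons o_apply)

text \<open>Each finite level of the diagram is true everywhere in the frame \<open>F M\<close> under the
  valuation that names by \<open>wvar i\<close> the image in \<open>F i\<close> (for \<open>i \<le> M\<close>).\<close>
definition diagram_val :: "nat \<Rightarrow> nat \<Rightarrow> nat set" where
  "diagram_val M n = {u \<in> fst (F M). \<exists>i w. n = prod_encode (i, w) \<and> i \<le> M \<and> f M i u = w}"

lemma sat_wvar: "u \<in> fst (F M) \<Longrightarrow>
    sat (F M) (diagram_val M) u (wvar i w) = (i \<le> M \<and> f M i u = w)"
  unfolding wvar_def diagram_val_def by auto

lemma sat_diagram: "\<delta> \<in> diagram M \<Longrightarrow> u \<in> fst (F M) \<Longrightarrow> sat (F M) (diagram_val M) u \<delta>"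
proof (induction rule: diagram.induct)
  case (d_one i)
  then show ?case using f_in[of i M u] by (auto simp: sat_disj set_worlds sat_wvar)
next
  case (d_uniq i w v)
  then show ?case by (auto simp: sat_wvar)
next
  case (d_comp j i w)
  then show ?case by (auto simp: sat_wvar f_comp)
next
  case (d_dia i w v a)
  then show ?case using f_bk[of i M u v a] by (auto simp: sat_wvar)
next
  case (d_box i w a)
  then show ?case using f_fw[of i M u _ a] f_in[of i M] by (auto simp: sat_wvar sat_disj set_worlds)
qed

lemma sat_boxed_diagram: "\<delta> \<in> boxed_diagram M \<Longrightarrow> u \<in> fst (F M) \<Longrightarrow> sat (F M) (diagram_val M) u \<delta>"
proof -
  assume "\<delta> \<in> boxed_diagram M" "u \<in> fst (F M)"
  then obtain bs d where d: "\<delta> = foldr Box bs d" "d \<in> diagram M"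
    unfolding boxed_diagram_def by blast
  have "\<forall>u\<in>fst (F M). sat (F M) (diagram_val M) u (foldr Box bs d)"
    by (induction bs) (auto simp: sat_diagram[OF d(2)])
  then show ?thesis using d \<open>u \<in> fst (F M)\<close> by blast
qed

lemma limit_in: "y \<in> fst (inverse_limit F f) \<Longrightarrow> y i \<in> fst (F i)"
  unfolding inverse_limit_def by auto

lemma limit_comp: "y \<in> fst (inverse_limit F f) \<Longrightarrow> j \<le> i \<Longrightarrow> f i j (y i) = y j"
  unfolding inverse_limit_def by auto

abbreviation point_names :: "(nat \<Rightarrow> nat) \<Rightarrow> nat set \<Rightarrow> 'm fm set" where
  "point_names y I \<equiv> (\<lambda>i. wvar i (y i)) ` I"

text \<open>Every point of the limit, together with the diagram, is consistent over any logic
  valid in all the frames: a finite part of it is satisfied at \<open>y M\<close> in \<open>F M\<close>.\<close>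
lemma point_consistent:
  assumes val: "\<forall>i. valid (F i) \<psi>" and y: "y \<in> fst (inverse_limit F f)"
  shows "consistent (KL {\<psi>}) (Delta \<union> point_names y UNIV)"
  unfolding consistent_def
proof
  assume "\<exists>ps. set ps \<subseteq> Delta \<union> point_names y UNIV \<and> foldr Imp ps Bot \<in> KL {\<psi>}"
  then obtain ps where ps: "set ps \<subseteq> Delta \<union> point_names y UNIV" "foldr Imp ps Bot \<in> KL {\<psi>}"
    by blast
  let ?A = "\<lambda>M. boxed_diagram M \<union> point_names y {..M}"
  have "mono ?A" using mono_boxed_diagram by (auto simp: mono_def)
  moreover have "set ps \<subseteq> (\<Union>M. ?A M)" using ps(1) unfolding Delta_def by blast
  ultimately obtain M where M: "set ps \<subseteq> ?A M"
    using finite_subset_mono_Union[of ?A "set ps"] by blast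
  have "valid (F M) (foldr Imp ps Bot)" using soundness[OF _ ps(2), of "F M"] val by blast
  then have "sat (F M) (diagram_val M) (y M) (foldr Imp ps Bot)"
    using limit_in[OF y] unfolding valid_def by blast
  moreover have "sat (F M) (diagram_val M) (y M) p" if "p \<in> set ps" for p
    using M that sat_boxed_diagram limit_in[OF y] sat_wvar limit_comp[OF y] by auto
  ultimately show False by (simp add: sat_foldr)
qed

text \<open>A maximal consistent set containing \<open>Delta\<close> names exactly one world of each frame;
  \<open>limit_point \<Gamma>\<close> collects these worlds.\<close>
definition limit_point :: "'m fm set \<Rightarrow> nat \<Rightarrow> nat" where
  "limit_point \<Gamma> i = (THE w. w \<in> fst (F i) \<and> wvar i w \<in> \<Gamma>)"

context
  fixes S :: "'m fm set" and \<Gamma> :: "'m fm set"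
  assumes mc: "max_consistent (KL S) \<Gamma>" and D: "Delta \<subseteq> \<Gamma>"
begin

text \<open>By the uniqueness formulas, \<open>\<Gamma>\<close> names at most one world of each frame.\<close>
lemma named_world_unique:
  assumes "w \<in> fst (F i)" "v \<in> fst (F i)" "wvar i w \<in> \<Gamma>" "wvar i v \<in> \<Gamma>" shows "w = v"
proof (rule ccontr)
  assume "w \<noteq> v"
  then have "Imp (wvar i w) (Neg (wvar i v)) \<in> \<Gamma>"
    using D diagram_Delta[OF d_uniq[of i i w v]] assms by blast
  then show False using mcs_mp[OF mc] mcs_bot[OF mc] assms by blast
qed

lemma limit_point_named: "limit_point \<Gamma> i \<in> fst (F i) \<and> wvar i (limit_point \<Gamma> i) \<in> \<Gamma>"
proof -
  have "disj (map (wvar i) (worlds i)) \<in> \<Gamma>" using D diagram_Delta[OF d_one[of i i]] by blast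
  then obtain p where "p \<in> set (map (wvar i) (worlds i))" "p \<in> \<Gamma>" using mcs_disj[OF mc] by blast
  then have "\<exists>w\<in>fst (F i). wvar i w \<in> \<Gamma>" using set_worlds by auto
  then have "\<exists>!w. w \<in> fst (F i) \<and> wvar i w \<in> \<Gamma>" using named_world_unique by blast
  then show ?thesis unfolding limit_point_def by (rule theI')
qed

lemma limit_point_eq: "w \<in> fst (F i) \<Longrightarrow> wvar i w \<in> \<Gamma> \<Longrightarrow> limit_point \<Gamma> i = w"
  using limit_point_named named_world_unique by metis

text \<open>By the commutation formulas, the chosen worlds form a point of the inverse limit.\<close>
lemma limit_point_in_limit: "limit_point \<Gamma> \<in> fst (inverse_limit F f)"
proof -
  have "f i j (limit_point \<Gamma> i) = limit_point \<Gamma> j" if "j \<le> i" for i j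
  proof -
    have h: "limit_point \<Gamma> i \<in> fst (F i)" "wvar i (limit_point \<Gamma> i) \<in> \<Gamma>"
      using limit_point_named by auto
    have "Imp (wvar i (limit_point \<Gamma> i)) (wvar j (f i j (limit_point \<Gamma> i))) \<in> \<Gamma>"
      using D diagram_Delta[OF d_comp[OF that _ h(1), of i]] by blast
    then have "wvar j (f i j (limit_point \<Gamma> i)) \<in> \<Gamma>" using mcs_mp[OF mc] h by blast
    then show ?thesis using limit_point_eq f_in[OF that h(1)] by metis
  qed
  then show ?thesis unfolding inverse_limit_def using limit_point_named by auto
qed

text \<open>A finite set of coordinate names of a limit point follows from the single name of its
  largest coordinate, using the commutation formulas under a box.\<close>
lemma point_names_from_top:
  assumes y: "y \<in> fst (inverse_limit F f)" and x: "x \<in> point_names y {..N}"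
  shows "Der S (insert (wvar N (y N)) {\<phi>. Box a \<phi> \<in> \<Gamma>}) x"
proof -
  obtain i where i: "i \<le> N" "x = wvar i (y i)" using x by auto
  have "Imp (wvar N (y N)) (wvar i (f N i (y N))) \<in> Delta"
    by (rule diagram_Delta[OF d_comp[OF i(1) _ limit_in[OF y], of N]]) simp
  then have "Imp (wvar N (y N)) x \<in> {\<phi>. Box a \<phi> \<in> \<Gamma>}"
    using D Delta_Box limit_comp[OF y i(1)] i(2) by auto
  then show ?thesis by (intro Der_mp[OF Der_hyp Der_hyp]) auto
qed

end

text \<open>If the limit point of \<open>\<Gamma>\<close> has \<open>y\<close> as an \<open>a\<close>-successor, then the \<open>a\<close>-boxed
  contents of \<open>\<Gamma>\<close> together with the names of \<open>y\<close> are consistent: otherwise some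
  \<open>Box a (Neg (wvar N (y N)))\<close> would lie in \<open>\<Gamma>\<close>, contradicting the diamond formulas.\<close>
lemma box_successor_consistent:
  assumes mc: "max_consistent (KL S) \<Gamma>" and D: "Delta \<subseteq> \<Gamma>"
    and y: "y \<in> fst (inverse_limit F f)" and R: "\<forall>i. snd (F i) a (limit_point \<Gamma> i) (y i)"
  shows "consistent (KL S) ({\<phi>. Box a \<phi> \<in> \<Gamma>} \<union> point_names y UNIV)"
    (is "consistent _ (?B \<union> _)")
  unfolding consistent_Der
proof
  assume "Der S (?B \<union> point_names y UNIV) Bot"
  then obtain ps where ps: "set ps \<subseteq> ?B \<union> point_names y UNIV" "foldr Imp ps Bot \<in> KL S"
    unfolding Der_def by blast
  have "mono (\<lambda>N. ?B \<union> point_names y {..N})" by (auto simp: mono_def)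
  moreover have "set ps \<subseteq> (\<Union>N. ?B \<union> point_names y {..N})" using ps(1) by blast
  ultimately obtain N where "set ps \<subseteq> ?B \<union> point_names y {..N}"
    using finite_subset_mono_Union[of _ "set ps"] by blast
  then have "Der S (?B \<union> point_names y {..N}) Bot" using ps(2) unfolding Der_def by blast
  then have "Der S (insert (wvar N (y N)) ?B) Bot"
    by (rule Der_cut) (auto intro: Der_hyp point_names_from_top[OF mc D y])
  then have "Der S ?B (Neg (wvar N (y N)))" by (rule Der_ded)
  then have "Der S \<Gamma> (Box a (Neg (wvar N (y N))))" by (rule Der_box) simp
  then have b: "Box a (Neg (wvar N (y N))) \<in> \<Gamma>" by (rule mcs_der[OF mc])
  have h: "limit_point \<Gamma> N \<in> fst (F N)" "wvar N (limit_point \<Gamma> N) \<in> \<Gamma>"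
    using limit_point_named[OF mc D] by auto
  have "Imp (wvar N (limit_point \<Gamma> N)) (Neg (Box a (Neg (wvar N (y N))))) \<in> \<Gamma>"
    using D diagram_Delta[OF d_dia[OF _ h(1) limit_in[OF y] R[rule_format], of N]] by blast
  then show False using mcs_mp[OF mc] mcs_bot[OF mc] h b by blast
qed

lemma limit_point_back:
  assumes mc: "max_consistent (KL S) \<Gamma>" and D: "Delta \<subseteq> \<Gamma>"
    and y: "y \<in> fst (inverse_limit F f)" and R: "\<forall>i. snd (F i) a (limit_point \<Gamma> i) (y i)"
  obtains \<Gamma>' where "max_consistent (KL S) \<Gamma>'" "Delta \<subseteq> \<Gamma>'"
    "\<forall>\<phi>. Box a \<phi> \<in> \<Gamma> \<longrightarrow> \<phi> \<in> \<Gamma>'" "limit_point \<Gamma>' = y"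
proof -
  let ?B = "{\<phi>. Box a \<phi> \<in> \<Gamma>}"
  obtain \<Gamma>' where G': "?B \<union> point_names y UNIV \<subseteq> \<Gamma>'" "max_consistent (KL S) \<Gamma>'"
    using lindenbaum[OF box_successor_consistent[OF mc D y R]] by blast
  have D': "Delta \<subseteq> \<Gamma>'" using D Delta_Box G'(1) by blast
  have "limit_point \<Gamma>' = y"
    using limit_point_eq[OF G'(2) D' limit_in[OF y]] G'(1) by blast
  then show thesis using G' D' that by blast
qed

lemma limit_point_forth:
  assumes mc: "max_consistent (KL S) \<Gamma>" and D: "Delta \<subseteq> \<Gamma>"
    and mc': "max_consistent (KL S) \<Gamma>'" and D': "Delta \<subseteq> \<Gamma>'"
    and R: "\<forall>\<phi>. Box a \<phi> \<in> \<Gamma> \<longrightarrow> \<phi> \<in> \<Gamma>'"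
  shows "snd (F i) a (limit_point \<Gamma> i) (limit_point \<Gamma>' i)"
proof -
  have h: "limit_point \<Gamma> i \<in> fst (F i)" "wvar i (limit_point \<Gamma> i) \<in> \<Gamma>"
    using limit_point_named[OF mc D] by auto
  let ?succs = "filter (snd (F i) a (limit_point \<Gamma> i)) (worlds i)"
  have "Imp (wvar i (limit_point \<Gamma> i)) (Box a (disj (map (wvar i) ?succs))) \<in> \<Gamma>"
    using D diagram_Delta[OF d_box[OF _ h(1), of i a]] by blast
  then have "disj (map (wvar i) ?succs) \<in> \<Gamma>'" using mcs_mp[OF mc] h R by blast
  then obtain p where "p \<in> set (map (wvar i) ?succs)" "p \<in> \<Gamma>'" using mcs_disj[OF mc'] by blast
  then obtain v where v: "v \<in> fst (F i)" "snd (F i) a (limit_point \<Gamma> i) v" "wvar i v \<in> \<Gamma>'"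
    using set_worlds by auto
  then show ?thesis using limit_point_eq[OF mc' D' v(1) v(3)] by simp
qed

theorem canonical_valid_inverse_limit:
  assumes val: "\<forall>i. valid (F i) \<psi>" and can: "canonical \<psi>"
  shows "valid (inverse_limit F f) \<psi>"
proof -
  define W where "W = fst (canonical_frame (KL {\<psi>}))"
  define R where "R = snd (canonical_frame (KL {\<psi>}))"
  define G where "G = {\<Gamma>. max_consistent (KL {\<psi>}) \<Gamma> \<and> Delta \<subseteq> \<Gamma>}"
  have W: "W = {\<Gamma>. max_consistent (KL {\<psi>}) \<Gamma>}"
    and R: "R = (\<lambda>a \<Gamma> \<Delta>. \<forall>\<phi>. Box a \<phi> \<in> \<Gamma> \<longrightarrow> \<phi> \<in> \<Delta>)"
    unfolding W_def R_def canonical_frame_def by simp_all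
  show ?thesis
  proof (rule valid_generated_bounded_image[where W = W and R = R and G = G and h = limit_point])
    show "valid (W, R) \<psi>" using can unfolding canonical_def W_def R_def by simp
    show "G \<subseteq> W" unfolding G_def W by blast
    show "v \<in> G" if "x \<in> G" "v \<in> W" "R a x v" for a x v
      using that Delta_Box unfolding G_def W R by blast
    show "limit_point x \<in> fst (inverse_limit F f)" if "x \<in> G" for x
      using that limit_point_in_limit unfolding G_def by blast
    show "snd (inverse_limit F f) a (limit_point x) (limit_point y)"
      if "x \<in> G" "y \<in> G" "R a x y" for a x y
      using that limit_point_forth unfolding G_def R inverse_limit_def by auto
    show "\<exists>u\<in>G. R a x u \<and> limit_point u = v"
      if x: "x \<in> G"
        and v: "v \<in> fst (inverse_limit F f)" "snd (inverse_limit F f) a (limit_point x) v"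
      for a x v
    proof -
      have "\<forall>i. snd (F i) a (limit_point x i) (v i)" using v(2) unfolding inverse_limit_def by simp
      then obtain \<Gamma>' where "max_consistent (KL {\<psi>}) \<Gamma>'" "Delta \<subseteq> \<Gamma>'"
          "\<forall>\<phi>. Box a \<phi> \<in> x \<longrightarrow> \<phi> \<in> \<Gamma>'" "limit_point \<Gamma>' = v"
        using limit_point_back[of "{\<psi>}" x, OF _ _ v(1)] x unfolding G_def by blast
      then show ?thesis unfolding G_def R by blast
    qed
    show "\<exists>x\<in>G. limit_point x = y" if y: "y \<in> fst (inverse_limit F f)" for y
    proof -
      obtain \<Gamma> where "Delta \<union> point_names y UNIV \<subseteq> \<Gamma>" "max_consistent (KL {\<psi>}) \<Gamma>"
        using lindenbaum[OF point_consistent[OF val y]] by blast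
      then show ?thesis
        using limit_point_eq[of "{\<psi>}" \<Gamma>, OF _ _ limit_in[OF y]] unfolding G_def by blast
    qed
  qed
qed

end

section \<open>Increasing chains of logics\<close>

lemma KL_chain_mono:
  fixes \<gamma> :: "nat \<Rightarrow> 'm fm"
  assumes chain: "\<And>i1 i2. i2 < i1 \<Longrightarrow> \<gamma> i2 \<in> KL {\<gamma> i1}" and "j \<le> k"
  shows "KL {\<gamma> j} \<subseteq> KL {\<gamma> k}"
proof -
  have "\<gamma> j \<in> KL {\<gamma> k}"
  proof (cases "j = k")
    case True then show ?thesis by (simp add: KL.hyp)
  next
    case False then show ?thesis using chain assms(2) by simp
  qed
  then have "{\<gamma> j} \<subseteq> KL {\<gamma> k}" by simp
  then show ?thesis using KL_mono by blast
qed

lemma KL_chain_Union: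
  fixes \<gamma> :: "nat \<Rightarrow> 'm fm"
  assumes chain: "\<And>i1 i2. i2 < i1 \<Longrightarrow> \<gamma> i2 \<in> KL {\<gamma> i1}"
  shows "KL (range \<gamma>) \<subseteq> (\<Union>m. KL {\<gamma> m})"
proof
  fix \<phi> assume "\<phi> \<in> KL (range \<gamma>)"
  then obtain A where A: "finite A" "A \<subseteq> range \<gamma>" "\<phi> \<in> KL A" using KL_compact by blast
  then obtain I where I: "finite I" "A = \<gamma> ` I" by (meson finite_subset_image)
  define m where "m = Max (insert 0 I)"
  have "A \<subseteq> KL {\<gamma> m}"
  proof
    fix x assume "x \<in> A"
    then obtain i where i: "i \<in> I" "x = \<gamma> i" using I(2) by blast
    then have "i \<le> m" unfolding m_def using I(1) by simp
    then have "KL {\<gamma> i} \<subseteq> KL {\<gamma> m}" using KL_chain_mono[of \<gamma> i m] chain by blast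
    then show "x \<in> KL {\<gamma> m}" using i(2) KL.hyp[of x "{x}"] by blast
  qed
  then have "\<phi> \<in> KL {\<gamma> m}" using A(3) KL_mono by blast
  then show "\<phi> \<in> (\<Union>m. KL {\<gamma> m})" by blast
qed

lemma KL_chain_finite:
  fixes \<gamma> :: "nat \<Rightarrow> 'm fm"
  assumes chain: "\<And>i1 i2. i2 < i1 \<Longrightarrow> \<gamma> i2 \<in> KL {\<gamma> i1}"
    and "finite B" "B \<subseteq> KL (range \<gamma>)"
  obtains m where "B \<subseteq> KL {\<gamma> m}"
proof -
  have "KL {\<gamma> i} \<subseteq> KL {\<gamma> j}" if "i \<le> j" for i j
    using KL_chain_mono[of \<gamma> i j] chain that by blast
  then have "mono (\<lambda>m. KL {\<gamma> m})" by (rule monoI)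
  moreover have "B \<subseteq> (\<Union>m. KL {\<gamma> m})" using assms(3) KL_chain_Union[of \<gamma>] chain by blast
  ultimately obtain m where "B \<subseteq> KL {\<gamma> m}" using finite_subset_mono_Union assms(2) by blast
  then show thesis by (rule that)
qed

theorem lemmal16:
  fixes \<gamma> :: "nat \<Rightarrow> 'm fm"
  assumes "\<And>i1 i2. i2 < i1 \<Longrightarrow> \<gamma> i2 \<in> KL {\<gamma> i1}"
    and "\<forall>l. \<exists>n. \<forall>k. \<exists>(F :: nat \<Rightarrow> (nat, 'm) frame) f.
           inverse_system F f \<and> (\<forall>i. finite_frame (F i)) \<and>
           (\<forall>i. valid (F i) (\<gamma> k)) \<and>
           valid (inverse_limit F f) (\<gamma> l) \<and>
           \<not> valid (inverse_limit F f) (\<gamma> n)"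
  shows "\<forall>\<Sigma>. KL \<Sigma> = KL (range \<gamma>) \<longrightarrow> infinite {\<phi> \<in> \<Sigma>. \<not> canonical \<phi>}"
proof (intro allI impI notI)
  fix \<Sigma> assume eq: "KL \<Sigma> = KL (range \<gamma>)" and fin: "finite {\<phi> \<in> \<Sigma>. \<not> canonical \<phi>}"
  have \<Sigma>: "\<Sigma> \<subseteq> KL (range \<gamma>)" using eq KL.hyp by blast
  obtain l where l: "{\<phi> \<in> \<Sigma>. \<not> canonical \<phi>} \<subseteq> KL {\<gamma> l}"
    using KL_chain_finite[of \<gamma>] assms(1) fin \<Sigma> by blast
  obtain n where n: "\<forall>k. \<exists>(F :: nat \<Rightarrow> (nat, 'm) frame) f.
      inverse_system F f \<and> (\<forall>i. finite_frame (F i)) \<and> (\<forall>i. valid (F i) (\<gamma> k)) \<and>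
      valid (inverse_limit F f) (\<gamma> l) \<and> \<not> valid (inverse_limit F f) (\<gamma> n)"
    using assms(2) by blast
  have "\<gamma> n \<in> KL \<Sigma>" using eq KL.hyp[of "\<gamma> n" "range \<gamma>"] by simp
  then obtain S where S: "finite S" "S \<subseteq> \<Sigma>" "\<gamma> n \<in> KL S" using KL_compact by blast
  obtain k where k: "S \<subseteq> KL {\<gamma> k}" using KL_chain_finite[of \<gamma> S] assms(1) S(1,2) \<Sigma> by blast
  obtain F :: "nat \<Rightarrow> (nat, 'm) frame" and f where Ff:
    "inverse_system F f" "\<forall>i. finite_frame (F i)" "\<forall>i. valid (F i) (\<gamma> k)"
    "valid (inverse_limit F f) (\<gamma> l)" "\<not> valid (inverse_limit F f) (\<gamma> n)"
    using n by blast
  have "valid (inverse_limit F f) \<sigma>" if "\<sigma> \<in> S" for \<sigma>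
  proof (cases "canonical \<sigma>")
    case True
    have "\<forall>i. valid (F i) \<sigma>" using Ff(3) k that soundness[of "{\<gamma> k}"] by blast
    then show ?thesis using canonical_valid_inverse_limit[OF Ff(1,2) _ True] by blast
  next
    case False
    then show ?thesis using Ff(4) l that S(2) soundness[of "{\<gamma> l}"] by blast
  qed
  then show False using soundness[OF _ S(3)] Ff(5) by blast
qed

end
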